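(* Let $(\Sigma,\partial\Sigma)$ be a weighted metric graph with boundary. For all $\omega=(f_e\,d't_e)\in\mathcal A^{1,0}(\Sigma,\partial\Sigma)$ and $\eta=(g_e\,d''t_e)\in\mathcal A^{0,1}(\Sigma,\partial\Sigma)$ we have $\int_\Sigma d''\omega=\int_{\partial\Sigma}\omega$ and $\int_\Sigma d'\eta=\int_{\partial\Sigma}\eta$.
   Context: A weighted metric graph with boundary $(\Sigma,\partial\Sigma)$: finite multigraph without loop edges, with for each oriented edge $e$ (tail $e^-$, head $e^+$) a length $\ell(e)>0$, parametrization $t_e\colon[0,\ell(e)]\to e$, $t_e(0)=e^-$, $t_{\bar e}(x)=t_e(\ell(e)-x)$, weight $w(e)=w(\bar e)\in\mathbb Z_{>0}$, boundary $\partial\Sigma\subset V(\Sigma)$. Smooth $(1,0)$-forms $(f_e\,d't_e)$ (resp. $(0,1)$-forms $(g_e\,d''t_e)$): families of smooth functions $f_e$ on edges (smooth meaning $f_e\circ t_e$ smooth on the closed interval) with $f_{\bar e}=-f_e$, such that at each vertex $v\notin\partial\Sigma$: if $v$ has valency 1, $f_e$ vanishes near $v$; if $v$ has valency 2 with outgoing edges $e_1,e_2$, then $w(e_1)^{n+1}\frac{d^nf_{e_1}}{dt_{e_1}^n}(v)=-(-1)^nw(e_2)^{n+1}\frac{d^nf_{e_2}}{dt_{e_2}^n}(v)$ for all $n\ge 0$; if valency $\ge3$, $\sum_{e^-=v}w(e)f_e(v)=0$. Operators: $d''(f_e\,d't_e)=(-\frac{df_e}{dt_e}\,d't_ed''t_e)$,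 $d'(g_e\,d''t_e)=(\frac{dg_e}{dt_e}\,d't_ed''t_e)$, where $\frac{d}{dt_e}$ is derivative of the function composed with $t_e$. Integrals: $\int_\Sigma(f_e\,d't_ed''t_e)=\frac12\sum_{e\text{ oriented}}w(e)\int_0^{\ell(e)}f_e\circ t_e(x)\,dx$; $\int_{\partial\Sigma}(f_e\,d't_e)=\sum_{v\in\partial\Sigma}\sum_{e^-=v}w(e)f_e(v)$; $\int_{\partial\Sigma}(g_e\,d''t_e)=\sum_{v\in\partial\Sigma}\sum_{e^+=v}w(e)g_e(v)$. *)

theory Defs
  imports "HOL-Analysis.Analysis"
begin

text \<open>Oriented edges form the set E of type 'e;
  tlv/hdv give tail and head, rv the reversed edge (e bar), len the length, w the weight,
  B the boundary vertex set. Functions on an edge e are represented through the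
  parametrization t_e, i.e. as real functions on the interval [0, len e].\<close>

definition wmgraph ::
  "'v set \<Rightarrow> 'e set \<Rightarrow> ('e \<Rightarrow> 'v) \<Rightarrow> ('e \<Rightarrow> 'v) \<Rightarrow> ('e \<Rightarrow> 'e) \<Rightarrow> ('e \<Rightarrow> real)
   \<Rightarrow> ('e \<Rightarrow> nat) \<Rightarrow> 'v set \<Rightarrow> bool" where
  "wmgraph V E tlv hdv rv len w B \<longleftrightarrow>
     finite V \<and> finite E \<and> B \<subseteq> V \<and>
     (\<forall>e\<in>E. tlv e \<in> V \<and> hdv e \<in> V \<and> tlv e \<noteq> hdv e \<and>
        rv e \<in> E \<and> rv (rv e) = e \<and> tlv (rv e) = hdv e \<and> hdv (rv e) = tlv e \<and>
        len e > 0 \<and> len (rv e) = len e \<and> w e > 0 \<and> w (rv e) = w e)"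

fun dnth :: "real \<Rightarrow> (real \<Rightarrow> real) \<Rightarrow> nat \<Rightarrow> real \<Rightarrow> real" where
  "dnth l f 0 = f"
| "dnth l f (Suc n) = (\<lambda>x. SOME d. (dnth l f n has_real_derivative d) (at x within {0..l}))"

definition smooth_cl :: "real \<Rightarrow> (real \<Rightarrow> real) \<Rightarrow> bool" where
  "smooth_cl l f \<longleftrightarrow>
     (\<forall>n. \<forall>x\<in>{0..l}. (dnth l f n has_real_derivative dnth l f (Suc n) x) (at x within {0..l}))"

definition valency :: "'e set \<Rightarrow> ('e \<Rightarrow> 'v) \<Rightarrow> 'v \<Rightarrow> nat" where
  "valency E tlv v = card {e\<in>E. tlv e = v}"

text \<open>Smooth (1,0)-forms (resp. (0,1)-forms; same conditions) on (Sigma, boundary):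
  F e x = f_e(t_e(x)).\<close>
definition is_form ::
  "'v set \<Rightarrow> 'e set \<Rightarrow> ('e \<Rightarrow> 'v) \<Rightarrow> ('e \<Rightarrow> 'v) \<Rightarrow> ('e \<Rightarrow> 'e) \<Rightarrow> ('e \<Rightarrow> real)
   \<Rightarrow> ('e \<Rightarrow> nat) \<Rightarrow> 'v set \<Rightarrow> ('e \<Rightarrow> real \<Rightarrow> real) \<Rightarrow> bool" where
  "is_form V E tlv hdv rv len w B F \<longleftrightarrow>
     (\<forall>e\<in>E. smooth_cl (len e) (F e)) \<and>
     (\<forall>e\<in>E. \<forall>x\<in>{0..len e}. F (rv e) x = - F e (len e - x)) \<and>
     (\<forall>v\<in>V - B.
        (valency E tlv v = 1 \<longrightarrow>
           (\<forall>e\<in>E. tlv e = v \<longrightarrow> (\<exists>\<epsilon>>0. \<forall>x\<in>{0..len e}. x < \<epsilon> \<longrightarrow> F e x = 0))) \<and>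
        (valency E tlv v = 2 \<longrightarrow>
           (\<forall>e1\<in>E. \<forall>e2\<in>E. tlv e1 = v \<longrightarrow> tlv e2 = v \<longrightarrow> e1 \<noteq> e2 \<longrightarrow>
              (\<forall>n. real (w e1) ^ (n+1) * dnth (len e1) (F e1) n 0
                   = - ((-1) ^ n * real (w e2) ^ (n+1) * dnth (len e2) (F e2) n 0)))) \<and>
        (valency E tlv v \<ge> 3 \<longrightarrow> (\<Sum>e\<in>{e\<in>E. tlv e = v}. real (w e) * F e 0) = 0))"

text \<open>Integral over Sigma of a (1,1)-form (h_e d't_e d''t_e).\<close>
definition int_Sigma :: "'e set \<Rightarrow> ('e \<Rightarrow> real) \<Rightarrow> ('e \<Rightarrow> nat) \<Rightarrow> ('e \<Rightarrow> real \<Rightarrow> real) \<Rightarrow> real" where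
  "int_Sigma E len w H = (1/2) * (\<Sum>e\<in>E. real (w e) * integral {0..len e} (H e))"

text \<open>d''(f_e d't_e) = (- df_e/dt_e d't_e d''t_e), d'(g_e d''t_e) = (dg_e/dt_e d't_e d''t_e).\<close>
definition d2 :: "('e \<Rightarrow> real) \<Rightarrow> ('e \<Rightarrow> real \<Rightarrow> real) \<Rightarrow> 'e \<Rightarrow> real \<Rightarrow> real" where
  "d2 len F = (\<lambda>e x. - dnth (len e) (F e) 1 x)"

definition d1 :: "('e \<Rightarrow> real) \<Rightarrow> ('e \<Rightarrow> real \<Rightarrow> real) \<Rightarrow> 'e \<Rightarrow> real \<Rightarrow> real" where
  "d1 len G = (\<lambda>e x. dnth (len e) (G e) 1 x)"

definition int_bd10 :: "'e set \<Rightarrow> ('e \<Rightarrow> 'v) \<Rightarrow> ('e \<Rightarrow> nat) \<Rightarrow> 'v set \<Rightarrow> ('e \<Rightarrow> real \<Rightarrow> real) \<Rightarrow> real" where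
  "int_bd10 E tlv w B F = (\<Sum>v\<in>B. \<Sum>e\<in>{e\<in>E. tlv e = v}. real (w e) * F e 0)"

definition int_bd01 :: "'e set \<Rightarrow> ('e \<Rightarrow> 'v) \<Rightarrow> ('e \<Rightarrow> real) \<Rightarrow> ('e \<Rightarrow> nat) \<Rightarrow> 'v set \<Rightarrow> ('e \<Rightarrow> real \<Rightarrow> real) \<Rightarrow> real" where
  "int_bd01 E hdv len w B G = (\<Sum>v\<in>B. \<Sum>e\<in>{e\<in>E. hdv e = v}. real (w e) * G e (len e))"

end

theory Submission
  imports Defs
begin

text \<open>On each oriented edge the fundamental theorem of calculus turns the integral of the
  derivative into the difference of the endpoint values. Since the form is odd under reversal
  of the edge, the value at the head of e is minus the value of the reversed edge at its tail,
  so summing over all oriented edges gives twice the weighted sum of the values at the tails.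
  Grouping this sum by tail vertex, the vertex conditions make every interior vertex
  contribute zero (at valency 2 only the order-0 matching condition is needed), and only the
  boundary vertices remain.\<close>

lemma smooth_cl_integral_dnth_1:
  assumes "smooth_cl l f" "l \<ge> 0"
  shows "integral {0..l} (dnth l f 1) = f l - f 0"
proof -
  have "(f has_vector_derivative dnth l f 1 x) (at x within {0..l})" if "x \<in> {0..l}" for x
    using assms(1) that unfolding smooth_cl_def
    by (metis One_nat_def dnth.simps(1) has_real_derivative_iff_has_vector_derivative)
  then show ?thesis
    using fundamental_theorem_of_calculus[OF assms(2)] by (metis integral_unique)
qed

lemma wmgraph_bij_betw_rv:
  assumes "wmgraph V E tlv hdv rv len w B"
  shows "bij_betw rv E E"
  by (rule bij_betw_byWitness[where f' = rv]) (use assms in \<open>auto simp: wmgraph_def\<close>)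

lemma wmgraph_bij_betw_rv_tail_head:
  assumes "wmgraph V E tlv hdv rv len w B"
  shows "bij_betw rv {e\<in>E. tlv e = v} {e\<in>E. hdv e = v}"
  by (rule bij_betw_byWitness[where f' = rv]) (use assms in \<open>auto simp: wmgraph_def\<close>)

lemma is_form_reverse_at_tail:
  assumes "wmgraph V E tlv hdv rv len w B" "is_form V E tlv hdv rv len w B H" "e \<in> E"
  shows "H (rv e) 0 = - H e (len e)"
proof -
  have "len e > 0" using assms(1,3) by (auto simp: wmgraph_def)
  then show ?thesis using assms(2,3) unfolding is_form_def
    by (metis atLeastAtMost_iff diff_zero order.refl less_imp_le)
qed

lemma is_form_integral_derivative:
  assumes wm: "wmgraph V E tlv hdv rv len w B" and fm: "is_form V E tlv hdv rv len w B H"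
  shows "(\<Sum>e\<in>E. real (w e) * integral {0..len e} (dnth (len e) (H e) 1))
       = - 2 * (\<Sum>e\<in>E. real (w e) * H e 0)"
proof -
  have "real (w e) * integral {0..len e} (dnth (len e) (H e) 1)
      = - (real (w e) * H e 0) - real (w (rv e)) * H (rv e) 0" if e: "e \<in> E" for e
  proof -
    have "len e > 0" "w (rv e) = w e" using wm e by (auto simp: wmgraph_def)
    moreover have "smooth_cl (len e) (H e)" using fm e by (simp add: is_form_def)
    ultimately have I: "integral {0..len e} (dnth (len e) (H e) 1) = H e (len e) - H e 0"
      by (intro smooth_cl_integral_dnth_1) auto
    show ?thesis
      unfolding I using is_form_reverse_at_tail[OF wm fm e] \<open>w (rv e) = w e\<close>
      by (simp add: algebra_simps)
  qed
  then have "(\<Sum>e\<in>E. real (w e) * integral {0..len e} (dnth (len e) (H e) 1))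
      = - (\<Sum>e\<in>E. real (w e) * H e 0) - (\<Sum>e\<in>E. real (w (rv e)) * H (rv e) 0)"
    by (simp add: sum_subtractf sum_negf)
  also have "(\<Sum>e\<in>E. real (w (rv e)) * H (rv e) 0) = (\<Sum>e\<in>E. real (w e) * H e 0)"
    using sum.reindex_bij_betw[OF wmgraph_bij_betw_rv[OF wm], of "\<lambda>e. real (w e) * H e 0"] .
  finally show ?thesis by simp
qed

lemma is_form_interior_vertex_sum:
  assumes wm: "wmgraph V E tlv hdv rv len w B" and fm: "is_form V E tlv hdv rv len w B F"
    and v: "v \<in> V - B"
  shows "(\<Sum>e\<in>{e\<in>E. tlv e = v}. real (w e) * F e 0) = 0"
proof -
  define S where "S = {e\<in>E. tlv e = v}"
  have "finite S" using wm by (simp add: S_def wmgraph_def)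
  have val: "valency E tlv v = card S" by (simp add: valency_def S_def)
  consider "card S = 0" | "card S = 1" | "card S = 2" | "card S \<ge> 3" by linarith
  then show ?thesis
  proof cases
    case 1
    then have "S = {}" using \<open>finite S\<close> by simp
    then show ?thesis by (simp flip: S_def)
  next
    case 2
    then obtain e where S: "S = {e}" by (meson card_1_singletonE)
    then have e: "e \<in> E" "tlv e = v" by (auto simp: S_def)
    have "\<exists>\<epsilon>>0. \<forall>x\<in>{0..len e}. x < \<epsilon> \<longrightarrow> F e x = 0"
      using fm v 2 e val unfolding is_form_def by auto
    moreover have "len e > 0" using wm e by (auto simp: wmgraph_def)
    ultimately have "F e 0 = 0" by force
    then show ?thesis by (simp flip: S_def add: S)
  next
    case 3
    then obtain e1 e2 where S: "S = {e1, e2}" "e1 \<noteq> e2" by (meson card_2_iff)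
    then have e: "e1 \<in> E" "tlv e1 = v" "e2 \<in> E" "tlv e2 = v" by (auto simp: S_def)
    have "valency E tlv v = 2" using 3 val by simp
    then have "\<forall>n. real (w e1) ^ (n + 1) * dnth (len e1) (F e1) n 0
        = - ((-1) ^ n * real (w e2) ^ (n + 1) * dnth (len e2) (F e2) n 0)"
      using fm v e S(2) unfolding is_form_def by simp
    from spec[OF this, of 0] have "real (w e1) * F e1 0 + real (w e2) * F e2 0 = 0"
      by simp
    then show ?thesis using S by (simp flip: S_def)
  next
    case 4
    then show ?thesis using fm v val by (simp add: is_form_def S_def)
  qed
qed

lemma is_form_tail_sum_eq_int_bd10:
  assumes wm: "wmgraph V E tlv hdv rv len w B" and fm: "is_form V E tlv hdv rv len w B F"
  shows "(\<Sum>e\<in>E. real (w e) * F e 0) = int_bd10 E tlv w B F"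
proof -
  have V: "finite V" "finite E" "B \<subseteq> V" "tlv ` E \<subseteq> V" using wm by (auto simp: wmgraph_def)
  have "(\<Sum>e\<in>E. real (w e) * F e 0) = (\<Sum>v\<in>V. \<Sum>e\<in>{e\<in>E. tlv e = v}. real (w e) * F e 0)"
    using sum.group[OF V(2,1,4), of "\<lambda>e. real (w e) * F e 0"] by simp
  also have "\<dots> = (\<Sum>v\<in>B. \<Sum>e\<in>{e\<in>E. tlv e = v}. real (w e) * F e 0)"
    using is_form_interior_vertex_sum[OF wm fm] V by (intro sum.mono_neutral_right) auto
  finally show ?thesis unfolding int_bd10_def .
qed

lemma is_form_int_bd01_eq_neg_int_bd10:
  assumes wm: "wmgraph V E tlv hdv rv len w B" and fm: "is_form V E tlv hdv rv len w B G"
  shows "int_bd01 E hdv len w B G = - int_bd10 E tlv w B G"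
proof -
  have "(\<Sum>e\<in>{e\<in>E. hdv e = v}. real (w e) * G e (len e))
      = (\<Sum>e\<in>{e\<in>E. tlv e = v}. - (real (w e) * G e 0))" for v
  proof -
    have "real (w (rv e)) * G (rv e) (len (rv e)) = - (real (w e) * G e 0)" if "e \<in> E" for e
      using wm that is_form_reverse_at_tail[OF wm fm, of "rv e"] by (auto simp: wmgraph_def)
    then show ?thesis
      using sum.reindex_bij_betw[OF wmgraph_bij_betw_rv_tail_head[OF wm],
          of "\<lambda>e. real (w e) * G e (len e)" v, symmetric]
      by simp
  qed
  then show ?thesis by (simp add: int_bd01_def int_bd10_def sum_negf)
qed

theorem theorem2p15:
  fixes V :: "'v set" and E :: "'e set" and tlv hdv :: "'e \<Rightarrow> 'v" and rv :: "'e \<Rightarrow> 'e"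
    and len :: "'e \<Rightarrow> real" and w :: "'e \<Rightarrow> nat" and B :: "'v set"
    and F G :: "'e \<Rightarrow> real \<Rightarrow> real"
  assumes "wmgraph V E tlv hdv rv len w B"
    and "is_form V E tlv hdv rv len w B F"
    and "is_form V E tlv hdv rv len w B G"
  shows "int_Sigma E len w (d2 len F) = int_bd10 E tlv w B F
       \<and> int_Sigma E len w (d1 len G) = int_bd01 E hdv len w B G"
proof
  have "int_Sigma E len w (d2 len F) = (\<Sum>e\<in>E. real (w e) * F e 0)"
    using is_form_integral_derivative[OF assms(1,2)]
    by (simp add: int_Sigma_def d2_def integral_neg sum_negf)
  then show "int_Sigma E len w (d2 len F) = int_bd10 E tlv w B F"
    using is_form_tail_sum_eq_int_bd10[OF assms(1,2)] by simp
  have "int_Sigma E len w (d1 len G) = - (\<Sum>e\<in>E. real (w e) * G e 0)"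
    using is_form_integral_derivative[OF assms(1,3)] by (simp add: int_Sigma_def d1_def)
  then show "int_Sigma E len w (d1 len G) = int_bd01 E hdv len w B G"
    using is_form_tail_sum_eq_int_bd10[OF assms(1,3)]
      is_form_int_bd01_eq_neg_int_bd10[OF assms(1,3)] by simp
qed

end
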